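(* For every sufficiently large integer $m$ there is a pseudoexpander with $m$ roots in which every root has pseudodegree at most $m^{1/4.9}$.
   Context: Logarithms are base 2. A rooted tree is extended if none of its leaves has a sibling. A graph $H$ is a binary tree based graph if it is the edge-disjoint union of extended rooted trees $T_1,\dots,T_m$ with roots $t_1,\dots,t_m$ (the roots of $H$, forming ${\bf Roots}(H)$) such that every vertex that is a leaf of some $T_i$ is a leaf of exactly two of the trees, and any two of the trees have at most one common vertex, which is then a leaf of both. $T_i,T_j$ are adjacent if they share a leaf. A pseudoedge is a pair $\{t_i,t_j\}$ with $T_i,T_j$ adjacent; the pseudodegree of $t_i$ is the number of pseudoedges containing $t_i$. A pseudomatching is a set of pairwise disjoint pseudoedges; it is between disjoint $U,V\subseteq{\bf Roots}(H)$ if each of its pseudoedges has one end in $U$ and one in $V$. $H$ is a pseudoexpander (with $m=|{\bf Roots}(H)|$) if (1) each $T_i$ has height (largest number of vertices on a root-leaf path) at most $(\log m)/4.9+3$, and (2) for any two disjoint $U,V\subseteq {\bf Roots}(H)$ with $|U|,|V|\ge m^{0.999}$ there is a pseudomatching between $U$ and $V$ of size at least $m^{0.999}/3$. *)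

theory Defs
  imports Complex_Main
begin

definition rooted_tree :: "'v set \<Rightarrow> ('v \<times> 'v) set \<Rightarrow> 'v \<Rightarrow> bool" where
  "rooted_tree V E r \<longleftrightarrow>
     finite V \<and> r \<in> V \<and> E \<subseteq> V \<times> V \<and>
     (\<forall>u. (u, r) \<notin> E) \<and>
     (\<forall>v \<in> V - {r}. \<exists>!u. (u, v) \<in> E) \<and>
     (\<forall>v \<in> V. (r, v) \<in> E\<^sup>*)"

definition children :: "('v \<times> 'v) set \<Rightarrow> 'v \<Rightarrow> 'v set" where
  "children E u = {w. (u, w) \<in> E}"

definition tree_leaves :: "'v set \<Rightarrow> ('v \<times> 'v) set \<Rightarrow> 'v set" where
  "tree_leaves V E = {v \<in> V. children E v = {}}"

definition extended_tree :: "'v set \<Rightarrow> ('v \<times> 'v) set \<Rightarrow> 'v \<Rightarrow> bool" where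
  "extended_tree V E r \<longleftrightarrow> rooted_tree V E r \<and>
     (\<forall>w \<in> tree_leaves V E. \<forall>u. (u, w) \<in> E \<longrightarrow> children E u = {w})"

text \<open>Height: the largest number of vertices on a root-leaf path.\<close>
definition tree_height :: "'v set \<Rightarrow> ('v \<times> 'v) set \<Rightarrow> 'v \<Rightarrow> nat" where
  "tree_height V E r = Max {length xs | xs. xs \<noteq> [] \<and> hd xs = r \<and>
       last xs \<in> tree_leaves V E \<and> successively (\<lambda>a b. (a, b) \<in> E) xs}"

text \<open>The graph H is given by its decomposition into trees T_i = (Vs i, Es i, rt i),
 i < m, with roots rt i (distinct, so that |Roots(H)| = m).\<close>

definition binary_tree_based ::
  "nat \<Rightarrow> (nat \<Rightarrow> 'v set) \<Rightarrow> (nat \<Rightarrow> ('v \<times> 'v) set) \<Rightarrow> (nat \<Rightarrow> 'v) \<Rightarrow> bool" where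
  "binary_tree_based m Vs Es rt \<longleftrightarrow>
     inj_on rt {..<m} \<and>
     (\<forall>i<m. extended_tree (Vs i) (Es i) (rt i)) \<and>
     \<comment> \<open>edge-disjoint (as undirected edges)\<close>
     (\<forall>i<m. \<forall>j<m. i \<noteq> j \<longrightarrow>
        (\<forall>a b. (a, b) \<in> Es i \<longrightarrow> (a, b) \<notin> Es j \<and> (b, a) \<notin> Es j)) \<and>
     \<comment> \<open>every leaf of some tree is a leaf of exactly two trees\<close>
     (\<forall>i<m. \<forall>v \<in> tree_leaves (Vs i) (Es i).
        card {j. j < m \<and> v \<in> tree_leaves (Vs j) (Es j)} = 2) \<and>
     \<comment> \<open>two trees share at most one vertex, which is a leaf of both\<close>
     (\<forall>i<m. \<forall>j<m. i \<noteq> j \<longrightarrow>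
        (\<forall>v w. v \<in> Vs i \<inter> Vs j \<and> w \<in> Vs i \<inter> Vs j \<longrightarrow> v = w) \<and>
        (\<forall>v \<in> Vs i \<inter> Vs j. v \<in> tree_leaves (Vs i) (Es i) \<and> v \<in> tree_leaves (Vs j) (Es j)))"

definition roots :: "nat \<Rightarrow> (nat \<Rightarrow> 'v) \<Rightarrow> 'v set" where
  "roots m rt = rt ` {..<m}"

definition adjacent_trees ::
  "(nat \<Rightarrow> 'v set) \<Rightarrow> (nat \<Rightarrow> ('v \<times> 'v) set) \<Rightarrow> nat \<Rightarrow> nat \<Rightarrow> bool" where
  "adjacent_trees Vs Es i j \<longleftrightarrow> i \<noteq> j \<and>
     tree_leaves (Vs i) (Es i) \<inter> tree_leaves (Vs j) (Es j) \<noteq> {}"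

definition pseudoedge ::
  "nat \<Rightarrow> (nat \<Rightarrow> 'v set) \<Rightarrow> (nat \<Rightarrow> ('v \<times> 'v) set) \<Rightarrow> (nat \<Rightarrow> 'v) \<Rightarrow> 'v set \<Rightarrow> bool" where
  "pseudoedge m Vs Es rt e \<longleftrightarrow>
     (\<exists>i<m. \<exists>j<m. adjacent_trees Vs Es i j \<and> e = {rt i, rt j})"

definition pseudodegree ::
  "nat \<Rightarrow> (nat \<Rightarrow> 'v set) \<Rightarrow> (nat \<Rightarrow> ('v \<times> 'v) set) \<Rightarrow> (nat \<Rightarrow> 'v) \<Rightarrow> 'v \<Rightarrow> nat" where
  "pseudodegree m Vs Es rt t = card {e. pseudoedge m Vs Es rt e \<and> t \<in> e}"

definition pseudomatching_between ::
  "nat \<Rightarrow> (nat \<Rightarrow> 'v set) \<Rightarrow> (nat \<Rightarrow> ('v \<times> 'v) set) \<Rightarrow> (nat \<Rightarrow> 'v)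
     \<Rightarrow> 'v set \<Rightarrow> 'v set \<Rightarrow> 'v set set \<Rightarrow> bool" where
  "pseudomatching_between m Vs Es rt U W M \<longleftrightarrow>
     (\<forall>e \<in> M. pseudoedge m Vs Es rt e) \<and>
     (\<forall>e \<in> M. \<forall>f \<in> M. e \<noteq> f \<longrightarrow> e \<inter> f = {}) \<and>
     (\<forall>e \<in> M. \<exists>u \<in> U. \<exists>w \<in> W. e = {u, w})"

definition pseudoexpander ::
  "nat \<Rightarrow> (nat \<Rightarrow> 'v set) \<Rightarrow> (nat \<Rightarrow> ('v \<times> 'v) set) \<Rightarrow> (nat \<Rightarrow> 'v) \<Rightarrow> bool" where
  "pseudoexpander m Vs Es rt \<longleftrightarrow>
     binary_tree_based m Vs Es rt \<and>
     (\<forall>i<m. real (tree_height (Vs i) (Es i) (rt i)) \<le> log 2 (real m) / 4.9 + 3) \<and>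
     (\<forall>U W. U \<subseteq> roots m rt \<and> W \<subseteq> roots m rt \<and> U \<inter> W = {} \<and>
        real (card U) \<ge> real m powr 0.999 \<and> real (card W) \<ge> real m powr 0.999 \<longrightarrow>
        (\<exists>M. pseudomatching_between m Vs Es rt U W M \<and>
             real (card M) \<ge> real m powr 0.999 / 3))"

end

theory Submission
  imports Defs "HOL-Combinatorics.Permutations" "HOL-Library.Ramsey" "HOL-Library.Nat_Bijection"
    "HOL-Real_Asymp.Real_Asymp"
begin

text \<open>The graph behind the pseudoexpander is a union of \<open>d \<approx> m\<^bsup>1/4.9\<^esup>/2\<close> permutation
graphs on \<open>{..<m}\<close>. A random permutation maps a given \<open>s\<close>-set off another one with probability at
most \<open>(1 - s/m)\<^sup>s\<close>, so by the union bound over all pairs of \<open>s\<close>-sets some choice of \<open>d\<close>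
permutations joins every two disjoint sets of size \<open>s \<approx> 2/3 m\<^bsup>0.999\<^esup>\<close> by an edge as soon as
\<open>m\<^sup>2 (1 - s/m)\<^sup>d < 1\<close>. Each vertex \<open>i\<close> is then blown up into a spider \<open>T\<^sub>i\<close> of height 3, with
one leg per neighbour \<open>j\<close> ending in a leaf shared with \<open>T\<^sub>j\<close>; pseudoedges are exactly the edges of
the graph. Finally, a maximum pseudomatching between \<open>U\<close> and \<open>W\<close> covers at least
\<open>m\<^bsup>0.999\<^esup>/3\<close> vertices of each side, for otherwise the uncovered parts are two disjoint sets of
more than \<open>2/3 m\<^bsup>0.999\<^esup>\<close> roots, which are joined by a pseudoedge.\<close>

section \<open>Permutations mapping one set off another\<close>

lemma exists_permutes_image_eq:
  assumes "finite S" "B \<subseteq> S" "B' \<subseteq> S" "card B = card B'"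
  shows "\<exists>\<rho>. \<rho> permutes S \<and> \<rho> ` B = B'"
proof -
  have "finite B" "finite B'" using assms finite_subset by auto
  then obtain f where f: "bij_betw f B B'" using finite_same_card_bij assms(4) by blast
  have "card (S - B) = card (S - B')"
    using assms \<open>finite B\<close> \<open>finite B'\<close> by (simp add: card_Diff_subset)
  then obtain g where g: "bij_betw g (S - B) (S - B')"
    using finite_same_card_bij assms(1) by blast
  define \<rho> where "\<rho> x = (if x \<in> B then f x else if x \<in> S then g x else x)" for x
  have "bij_betw \<rho> B B'" using f by (rule bij_betw_cong[THEN iffD1, rotated]) (simp add: \<rho>_def)
  moreover have "bij_betw \<rho> (S - B) (S - B')"
    using g by (rule bij_betw_cong[THEN iffD1, rotated]) (simp add: \<rho>_def)
  ultimately have "bij_betw \<rho> (B \<union> (S - B)) (B' \<union> (S - B'))"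
    by (rule bij_betw_combine) auto
  with assms have "\<rho> permutes S"
    by (intro bij_imp_permutes) (auto simp: \<rho>_def Un_absorb1)
  moreover have "\<rho> ` B = B'" using f by (auto simp: bij_betw_def \<rho>_def)
  ultimately show ?thesis by blast
qed

definition avoiding_perms :: "'a set \<Rightarrow> 'a set \<Rightarrow> 'a set \<Rightarrow> ('a \<Rightarrow> 'a) set" where
  "avoiding_perms S A B = {\<sigma>. \<sigma> permutes S \<and> \<sigma> ` A \<inter> B = {}}"

lemma finite_avoiding_perms: "finite S \<Longrightarrow> finite (avoiding_perms S A B)"
  unfolding avoiding_perms_def by (rule finite_subset[OF _ finite_permutations]) auto

lemma comp_in_avoiding_perms:
  assumes "\<rho> permutes S" "\<rho> ` B = B'" "\<sigma> \<in> avoiding_perms S A B"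
  shows "\<rho> \<circ> \<sigma> \<in> avoiding_perms S A B'"
proof -
  have "(\<rho> \<circ> \<sigma>) ` A \<inter> B' = \<rho> ` (\<sigma> ` A \<inter> B)"
    using permutes_inj[OF assms(1)] assms(2) by (auto simp: image_Int image_comp)
  then show ?thesis using assms by (simp add: avoiding_perms_def permutes_compose)
qed

lemma card_avoiding_perms_cong:
  assumes "finite S" "B \<subseteq> S" "B' \<subseteq> S" "card B = card B'"
  shows "card (avoiding_perms S A B) = card (avoiding_perms S A B')"
proof -
  obtain \<rho> where \<rho>: "\<rho> permutes S" "\<rho> ` B = B'"
    using exists_permutes_image_eq[OF assms] by blast
  have \<rho>': "inv \<rho> permutes S" "inv \<rho> ` B' = B"
    using permutes_inv[OF \<rho>(1)] image_inv_f_f[OF permutes_inj[OF \<rho>(1)]] \<rho>(2) by auto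
  have "bij_betw ((\<circ>) \<rho>) (avoiding_perms S A B) (avoiding_perms S A B')"
  proof (rule bij_betw_byWitness[where f' = "(\<circ>) (inv \<rho>)"])
    show "\<forall>\<sigma>\<in>avoiding_perms S A B. inv \<rho> \<circ> (\<rho> \<circ> \<sigma>) = \<sigma>"
      "\<forall>\<sigma>\<in>avoiding_perms S A B'. \<rho> \<circ> (inv \<rho> \<circ> \<sigma>) = \<sigma>"
      by (simp_all add: fun_eq_iff permutes_inverses[OF \<rho>(1)])
    show "(\<circ>) \<rho> ` avoiding_perms S A B \<subseteq> avoiding_perms S A B'"
      using comp_in_avoiding_perms[OF \<rho>] by blast
    show "(\<circ>) (inv \<rho>) ` avoiding_perms S A B' \<subseteq> avoiding_perms S A B"
      using comp_in_avoiding_perms[OF \<rho>'] by blast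
  qed
  then show ?thesis by (rule bij_betw_same_card)
qed

lemma card_avoiding_perms:
  assumes S: "finite S" and A: "A \<subseteq> S" and B: "B \<subseteq> S"
  shows "card (avoiding_perms S A B) * (card S choose card B)
    = fact (card S) * ((card S - card A) choose card B)"
proof -
  let ?P = "{\<sigma>. \<sigma> permutes S}" and ?Sub = "[S]\<^bsup>card B\<^esup>"
  have count_perms: "card {\<sigma> \<in> ?P. \<sigma> ` A \<inter> B' = {}} = card (avoiding_perms S A B)"
    if "B' \<in> ?Sub" for B'
    using that card_avoiding_perms_cong[OF S B, of B' A] B
    by (auto simp: nsets_def avoiding_perms_def Collect_conj_eq)
  have count_subsets: "card {B' \<in> ?Sub. \<sigma> ` A \<inter> B' = {}} = (card S - card A) choose card B"
    if "\<sigma> \<in> ?P" for \<sigma>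
  proof -
    have \<sigma>: "\<sigma> permutes S" using that by simp
    have "\<sigma> ` A \<subseteq> S" using A permutes_image[OF \<sigma>] by blast
    moreover have "card (\<sigma> ` A) = card A"
      using permutes_inj[OF \<sigma>] by (simp add: card_image inj_on_subset)
    ultimately have "card (S - \<sigma> ` A) = card S - card A"
      using S by (simp add: card_Diff_subset finite_subset)
    moreover have "{B' \<in> ?Sub. \<sigma> ` A \<inter> B' = {}} = [S - \<sigma> ` A]\<^bsup>card B\<^esup>"
      by (auto simp: nsets_def)
    ultimately show ?thesis by simp
  qed
  have "(\<Sum>B'\<in>?Sub. card {\<sigma> \<in> ?P. \<sigma> ` A \<inter> B' = {}})
      = (\<Sum>\<sigma>\<in>?P. card {B' \<in> ?Sub. \<sigma> ` A \<inter> B' = {}})"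
    by (rule sum_multicount_gen) (auto simp: S finite_imp_finite_nsets finite_permutations)
  then show ?thesis
    using count_perms count_subsets S by (simp add: card_permutations mult.commute)
qed

lemma binomial_diff_le:
  assumes "a \<le> n"
  shows "real ((n - a) choose b) \<le> real (n choose b) * (1 - real a / real n) ^ b"
proof (cases "a + b \<le> n")
  case False
  have "0 \<le> 1 - real a / real n"
    using assms by (cases "n = 0") (auto simp: field_simps)
  then have "0 \<le> real (n choose b) * (1 - real a / real n) ^ b" by simp
  moreover have "(n - a) choose b = 0"
    using False assms by (simp add: binomial_eq_0)
  ultimately show ?thesis by (simp only: of_nat_0)
next
  case True
  have falling: "fact b * real (k choose b) = (\<Prod>i = 0..<b. real k - real i)" for k
    by (simp add: binomial_gbinomial gbinomial_mult_fact)
  have "fact b * real ((n - a) choose b) = (\<Prod>i = 0..<b. real (n - a) - real i)"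
    by (rule falling)
  also have "\<dots> \<le> (\<Prod>i = 0..<b. (real n - real i) * (1 - real a / real n))"
  proof (rule prod_mono)
    fix i assume "i \<in> {0..<b}"
    moreover have "real n - real a - real i \<le> (real n - real i) * (1 - real a / real n)"
    proof (cases "n = 0")
      case False
      then have "(real n - real i) * (1 - real a / real n)
          = real n - real a - real i + real i * real a / real n"
        by (simp add: field_simps)
      then show ?thesis by simp
    qed simp
    ultimately show "0 \<le> real (n - a) - real i \<and>
        real (n - a) - real i \<le> (real n - real i) * (1 - real a / real n)"
      using True assms by (auto simp: of_nat_diff)
  qed
  also have "\<dots> = fact b * real (n choose b) * (1 - real a / real n) ^ b"
    by (simp add: prod.distrib falling)
  finally show ?thesis by simp
qed

lemma card_avoiding_perms_le:
  assumes "finite S" "A \<subseteq> S" "B \<subseteq> S"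
  shows "real (card (avoiding_perms S A B))
    \<le> fact (card S) * (1 - real (card A) / real (card S)) ^ card B"
proof -
  have pos: "0 < real (card S choose card B)"
    using assms by (simp add: card_mono)
  have "real (card (avoiding_perms S A B)) * real (card S choose card B)
      = fact (card S) * real ((card S - card A) choose card B)"
    using card_avoiding_perms[OF assms] by (metis of_nat_fact of_nat_mult)
  also have "\<dots> \<le> fact (card S) * (real (card S choose card B) * (1 - real (card A) / real (card S)) ^ card B)"
    using assms by (intro mult_left_mono binomial_diff_le) (auto simp: card_mono)
  finally show ?thesis
    using pos by (simp add: mult.commute mult.left_commute)
qed

text \<open>Union bound: a \<open>d\<close>-tuple of permutations is bad for a pair \<open>(A, B)\<close> of \<open>s\<close>-sets if each of
  its members maps \<open>A\<close> off \<open>B\<close>.\<close>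

lemma card_bad_perm_tuples_less:
  assumes S: "finite S" and s: "1 \<le> s" "s \<le> card S"
    and small: "real (card S) ^ 2 * (1 - real s / real (card S)) ^ d < 1"
  shows "card (\<Union>(A, B)\<in>[S]\<^bsup>s\<^esup> \<times> [S]\<^bsup>s\<^esup>. PiE {..<d} (\<lambda>_. avoiding_perms S A B))
    < card (PiE {..<d} (\<lambda>_. {\<sigma>. \<sigma> permutes S}))"
proof -
  let ?n = "card S" and ?Sub = "[S]\<^bsup>s\<^esup>"
  define q where "q = 1 - real s / real ?n"
  have q: "0 \<le> q" using s by (simp add: q_def field_simps)
  have "card (\<Union>(A, B)\<in>?Sub \<times> ?Sub. PiE {..<d} (\<lambda>_. avoiding_perms S A B))
      \<le> (\<Sum>(A, B)\<in>?Sub \<times> ?Sub. card (avoiding_perms S A B) ^ d)"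
    using card_UN_le[of "?Sub \<times> ?Sub" "\<lambda>(A, B). PiE {..<d} (\<lambda>_. avoiding_perms S A B)"] S
    by (simp add: finite_imp_finite_nsets card_PiE split_def)
  then have "real (card (\<Union>(A, B)\<in>?Sub \<times> ?Sub. PiE {..<d} (\<lambda>_. avoiding_perms S A B)))
      \<le> real (\<Sum>(A, B)\<in>?Sub \<times> ?Sub. card (avoiding_perms S A B) ^ d)"
    by (rule of_nat_mono)
  also have "\<dots> = (\<Sum>(A, B)\<in>?Sub \<times> ?Sub. real (card (avoiding_perms S A B)) ^ d)"
    by (simp add: split_def)
  also have "\<dots> \<le> (\<Sum>(A, B)\<in>?Sub \<times> ?Sub. (fact ?n * q ^ s) ^ d)"
    using card_avoiding_perms_le[OF S]
    by (intro sum_mono) (auto simp: nsets_def q_def intro!: power_mono, metis)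
  also have "\<dots> = real (?n choose s) ^ 2 * (fact ?n * q ^ s) ^ d"
    by (simp add: card_cartesian_product power2_eq_square)
  also have "\<dots> \<le> (real ?n ^ s) ^ 2 * (fact ?n * q ^ s) ^ d"
    using binomial_le_pow[OF s(2)] q
    by (intro mult_right_mono power_mono) (simp_all flip: of_nat_power)
  also have "\<dots> = (real ?n ^ 2 * q ^ d) ^ s * fact ?n ^ d"
    by (simp add: power_mult_distrib ac_simps flip: power_mult)
  also have "\<dots> < fact ?n ^ d"
    using small[folded q_def] q s by (simp add: power_less_one_iff)
  also have "\<dots> = real (card (PiE {..<d} (\<lambda>_. {\<sigma>. \<sigma> permutes S})))"
    using S by (simp add: card_PiE card_permutations)
  finally show ?thesis by linarith
qed

lemma exists_perms_hitting_all_pairs: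
  assumes S: "finite S" and s: "1 \<le> s" "s \<le> card S"
    and small: "real (card S) ^ 2 * (1 - real s / real (card S)) ^ d < 1"
  obtains \<tau> where "\<And>i. i < d \<Longrightarrow> \<tau> i permutes S"
    and "\<And>A B. A \<in> [S]\<^bsup>s\<^esup> \<Longrightarrow> B \<in> [S]\<^bsup>s\<^esup> \<Longrightarrow> \<exists>i<d. \<tau> i ` A \<inter> B \<noteq> {}"
proof -
  let ?Bad = "\<Union>(A, B)\<in>[S]\<^bsup>s\<^esup> \<times> [S]\<^bsup>s\<^esup>. PiE {..<d} (\<lambda>_. avoiding_perms S A B)"
  let ?All = "PiE {..<d} (\<lambda>_. {\<sigma>. \<sigma> permutes S})"
  have "finite ?Bad"
    using S by (auto simp: finite_imp_finite_nsets finite_avoiding_perms intro!: finite_PiE)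
  then have "\<not> ?All \<subseteq> ?Bad"
    using card_bad_perm_tuples_less[OF assms] card_mono[of ?Bad ?All] by linarith
  then obtain \<tau> where \<tau>: "\<tau> \<in> ?All" "\<tau> \<notin> ?Bad" by blast
  show thesis
  proof
    show "\<tau> i permutes S" if "i < d" for i using \<tau>(1) that by auto
    fix A B assume "A \<in> [S]\<^bsup>s\<^esup>" "B \<in> [S]\<^bsup>s\<^esup>"
    then have "\<tau> \<notin> PiE {..<d} (\<lambda>_. avoiding_perms S A B)" using \<tau>(2) by blast
    then show "\<exists>i<d. \<tau> i ` A \<inter> B \<noteq> {}"
      using \<tau>(1) by (auto simp: PiE_iff avoiding_perms_def)
  qed
qed

section \<open>Sparse expanders from permutations\<close>

definition simple_graph_no_isolated :: "nat \<Rightarrow> (nat \<Rightarrow> nat \<Rightarrow> bool) \<Rightarrow> bool" where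
  "simple_graph_no_isolated m adj \<longleftrightarrow>
     (\<forall>x y. adj x y \<longrightarrow> x < m \<and> y < m \<and> x \<noteq> y \<and> adj y x) \<and> (\<forall>x<m. \<exists>y. adj x y)"

definition sparse_expander :: "nat \<Rightarrow> real \<Rightarrow> real \<Rightarrow> (nat \<Rightarrow> nat \<Rightarrow> bool) \<Rightarrow> bool" where
  "sparse_expander m D t adj \<longleftrightarrow> simple_graph_no_isolated m adj \<and>
     (\<forall>x. real (card {y. adj x y}) \<le> D) \<and>
     (\<forall>A B. A \<subseteq> {..<m} \<longrightarrow> B \<subseteq> {..<m} \<longrightarrow> A \<inter> B = {} \<longrightarrow> t < card A \<longrightarrow> t < card B \<longrightarrow>
        (\<exists>a\<in>A. \<exists>b\<in>B. adj a b))"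

lemma sparse_expander_mono:
  assumes "sparse_expander m D t adj" "D \<le> D'" "t \<le> t'"
  shows "sparse_expander m D' t' adj"
  using assms unfolding sparse_expander_def by (meson order_trans le_less_trans)

text \<open>The path edges \<open>x -- x + 1\<close> only ensure that no vertex is isolated, so that every spider has
  a leaf.\<close>

definition perm_graph :: "nat \<Rightarrow> nat \<Rightarrow> (nat \<Rightarrow> nat \<Rightarrow> nat) \<Rightarrow> nat \<Rightarrow> nat \<Rightarrow> bool" where
  "perm_graph m d \<tau> x y \<longleftrightarrow> x < m \<and> y < m \<and> x \<noteq> y \<and>
     ((\<exists>i<d. \<tau> i x = y \<or> \<tau> i y = x) \<or> y = Suc x \<or> x = Suc y)"

lemma simple_graph_no_isolated_perm_graph:
  assumes "2 \<le> m"
  shows "simple_graph_no_isolated m (perm_graph m d \<tau>)"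
  unfolding simple_graph_no_isolated_def
proof (intro conjI allI impI)
  fix x assume "x < m"
  show "\<exists>y. perm_graph m d \<tau> x y"
  proof (cases "Suc x < m")
    case True
    then have "perm_graph m d \<tau> x (Suc x)" by (simp add: perm_graph_def)
    then show ?thesis ..
  next
    case False
    then have "perm_graph m d \<tau> x (x - 1)" using \<open>x < m\<close> assms by (auto simp: perm_graph_def)
    then show ?thesis ..
  qed
qed (auto simp: perm_graph_def)

lemma card_perm_graph_neighbours_le:
  assumes \<tau>: "\<And>i. i < d \<Longrightarrow> \<tau> i permutes {..<m}"
  shows "card {y. perm_graph m d \<tau> x y} \<le> 2 * d + 2"
proof -
  let ?X = "(\<lambda>i. \<tau> i x) ` {..<d}" and ?Y = "(\<lambda>i. inv (\<tau> i) x) ` {..<d}"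
  have "{y. perm_graph m d \<tau> x y} \<subseteq> ?X \<union> ?Y \<union> {Suc x, x - 1}"
  proof
    fix y assume "y \<in> {y. perm_graph m d \<tau> x y}"
    then have "(\<exists>i<d. \<tau> i x = y \<or> \<tau> i y = x) \<or> y = Suc x \<or> x = Suc y"
      by (simp add: perm_graph_def)
    then consider i where "i < d" "\<tau> i x = y" | i where "i < d" "\<tau> i y = x" | "y = Suc x" | "x = Suc y"
      by blast
    then show "y \<in> ?X \<union> ?Y \<union> {Suc x, x - 1}"
    proof cases
      case (2 i)
      then have "inv (\<tau> i) x = y" using permutes_inv_eq[OF \<tau>] by blast
      then show ?thesis using \<open>i < d\<close> by blast
    qed auto
  qed
  then have "card {y. perm_graph m d \<tau> x y} \<le> card (?X \<union> ?Y \<union> {Suc x, x - 1})"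
    by (intro card_mono) auto
  also have "\<dots> \<le> card ?X + card ?Y + card {Suc x, x - 1}"
    using card_Un_le[of ?X ?Y] card_Un_le[of "?X \<union> ?Y" "{Suc x, x - 1}"] by linarith
  also have "\<dots> \<le> d + d + 2"
    by (intro add_mono card_image_le[of "{..<d}", simplified] card_insert_le_m1) auto
  finally show ?thesis by simp
qed

lemma sq_mult_power_less_one:
  fixes n x :: real
  assumes "0 < n" "0 \<le> x" "x \<le> 1" "2 * ln n < real d * x"
  shows "n ^ 2 * (1 - x) ^ d < 1"
proof -
  have "n ^ 2 = exp (2 * ln n)"
    using assms(1) by (subst exp_of_nat_mult[of 2, simplified]) simp
  moreover have "(1 - x) ^ d \<le> exp (- x) ^ d"
    using assms(2,3) exp_ge_add_one_self[of "- x"] by (intro power_mono) simp_all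
  ultimately have "n ^ 2 * (1 - x) ^ d \<le> exp (2 * ln n) * exp (- x) ^ d"
    by simp
  also have "\<dots> = exp (2 * ln n - real d * x)"
    by (simp add: exp_diff exp_of_nat_mult[symmetric] exp_minus field_simps)
  also have "\<dots> < 1" using assms(4) by simp
  finally show ?thesis .
qed

lemma exists_sparse_expander:
  assumes m: "2 \<le> m" and s: "1 \<le> s" "s \<le> m"
    and dense: "2 * ln (real m) < real d * real s / real m"
  shows "\<exists>adj. sparse_expander m (2 * real d + 2) (real s - 1) adj"
proof -
  have "real (card {..<m}) ^ 2 * (1 - real s / real (card {..<m})) ^ d < 1"
    using m s dense by (intro sq_mult_power_less_one) auto
  moreover have "s \<le> card {..<m}" using s by simp
  ultimately obtain \<tau> where \<tau>: "\<And>i. i < d \<Longrightarrow> \<tau> i permutes {..<m}"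
    and hits: "\<And>A B. A \<in> [{..<m}]\<^bsup>s\<^esup> \<Longrightarrow> B \<in> [{..<m}]\<^bsup>s\<^esup> \<Longrightarrow> \<exists>i<d. \<tau> i ` A \<inter> B \<noteq> {}"
    using exists_perms_hitting_all_pairs[OF finite_lessThan s(1)] by blast
  have "sparse_expander m (2 * real d + 2) (real s - 1) (perm_graph m d \<tau>)"
    unfolding sparse_expander_def
  proof (intro conjI allI impI)
    show "simple_graph_no_isolated m (perm_graph m d \<tau>)"
      using m by (rule simple_graph_no_isolated_perm_graph)
    have "card {y. perm_graph m d \<tau> x y} \<le> 2 * d + 2" for x
      using \<tau> by (rule card_perm_graph_neighbours_le)
    from of_nat_mono[OF this]
    show "real (card {y. perm_graph m d \<tau> x y}) \<le> 2 * real d + 2" for x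
      by (simp only: of_nat_add of_nat_mult of_nat_numeral)
    fix A B assume AB: "A \<subseteq> {..<m}" "B \<subseteq> {..<m}" "A \<inter> B = {}"
      "real s - 1 < card A" "real s - 1 < card B"
    then have "s \<le> card A" "s \<le> card B" by linarith+
    then obtain A' B' where "A' \<subseteq> A" "card A' = s" "B' \<subseteq> B" "card B' = s"
      using obtain_subset_with_card_n by metis
    with AB obtain i a where "i < d" "a \<in> A" "\<tau> i a \<in> B"
      using hits[of A' B'] by (force simp: nsets_def finite_subset)
    with AB show "\<exists>a\<in>A. \<exists>b\<in>B. perm_graph m d \<tau> a b"
      by (force simp: perm_graph_def)
  qed
  then show ?thesis by blast
qed

section \<open>Spider trees\<close>

text \<open>Roots, middle vertices and leaves lie in different residue classes mod 3. The leaf of the leg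
  of \<open>T\<^sub>i\<close> towards \<open>j\<close> depends only on \<open>{i, j}\<close>; this glues \<open>T\<^sub>i\<close> and \<open>T\<^sub>j\<close> together.\<close>

definition root_vertex :: "nat \<Rightarrow> nat" where
  "root_vertex i = 3 * i"

definition mid_vertex :: "nat \<Rightarrow> nat \<Rightarrow> nat" where
  "mid_vertex i j = 3 * prod_encode (i, j) + 1"

definition shared_leaf :: "nat \<Rightarrow> nat \<Rightarrow> nat" where
  "shared_leaf i j = 3 * prod_encode (min i j, max i j) + 2"

lemma root_vertex_eq_iff [simp]: "root_vertex i = root_vertex j \<longleftrightarrow> i = j"
  by (simp add: root_vertex_def)

lemma mid_vertex_eq_iff [simp]: "mid_vertex i j = mid_vertex k l \<longleftrightarrow> i = k \<and> j = l"
  by (simp add: mid_vertex_def prod_encode_eq)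

lemma shared_leaf_commute: "shared_leaf i j = shared_leaf j i"
  by (simp add: shared_leaf_def min.commute max.commute)

lemma shared_leaf_eq_iff: "shared_leaf i j = shared_leaf k l \<longleftrightarrow> (k = i \<and> l = j) \<or> (k = j \<and> l = i)"
  by (auto simp: shared_leaf_def prod_encode_eq min_def max_def split: if_splits)

lemma spider_vertices_distinct [simp]:
  "root_vertex i \<noteq> mid_vertex k l" "mid_vertex k l \<noteq> root_vertex i"
  "root_vertex i \<noteq> shared_leaf k l" "shared_leaf k l \<noteq> root_vertex i"
  "mid_vertex i j \<noteq> shared_leaf k l" "shared_leaf k l \<noteq> mid_vertex i j"
  unfolding root_vertex_def mid_vertex_def shared_leaf_def by presburger+

definition spider_vertices :: "(nat \<Rightarrow> nat \<Rightarrow> bool) \<Rightarrow> nat \<Rightarrow> nat set" where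
  "spider_vertices adj i =
     insert (root_vertex i) (mid_vertex i ` {j. adj i j} \<union> shared_leaf i ` {j. adj i j})"

definition spider_edges :: "(nat \<Rightarrow> nat \<Rightarrow> bool) \<Rightarrow> nat \<Rightarrow> (nat \<times> nat) set" where
  "spider_edges adj i =
     (\<lambda>j. (root_vertex i, mid_vertex i j)) ` {j. adj i j} \<union>
     (\<lambda>j. (mid_vertex i j, shared_leaf i j)) ` {j. adj i j}"

lemma mem_spider_vertices:
  "v \<in> spider_vertices adj i \<longleftrightarrow>
     v = root_vertex i \<or> (\<exists>j. adj i j \<and> (v = mid_vertex i j \<or> v = shared_leaf i j))"
  by (auto simp: spider_vertices_def)

lemma mem_spider_edges:
  "(a, b) \<in> spider_edges adj i \<longleftrightarrow>
     (\<exists>j. adj i j \<and> (a = root_vertex i \<and> b = mid_vertex i j \<or> a = mid_vertex i j \<and> b = shared_leaf i j))"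
  by (auto simp: spider_edges_def)

lemma children_spider_mid: "adj i j \<Longrightarrow> children (spider_edges adj i) (mid_vertex i j) = {shared_leaf i j}"
  by (auto simp: children_def mem_spider_edges)

lemma tree_leaves_spider:
  assumes "\<exists>j. adj i j"
  shows "tree_leaves (spider_vertices adj i) (spider_edges adj i) = shared_leaf i ` {j. adj i j}"
  using assms
  by (auto simp: tree_leaves_def children_def mem_spider_vertices mem_spider_edges shared_leaf_eq_iff)

lemma rooted_tree_spider:
  assumes "finite {j. adj i j}"
  shows "rooted_tree (spider_vertices adj i) (spider_edges adj i) (root_vertex i)"
  unfolding rooted_tree_def
proof (intro conjI ballI allI)
  show "finite (spider_vertices adj i)" using assms by (simp add: spider_vertices_def)
  show "\<exists>!u. (u, v) \<in> spider_edges adj i" if "v \<in> spider_vertices adj i - {root_vertex i}" for v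
    using that by (auto simp: mem_spider_vertices mem_spider_edges shared_leaf_eq_iff)
  show "(root_vertex i, v) \<in> (spider_edges adj i)\<^sup>*" if "v \<in> spider_vertices adj i" for v
  proof -
    have "(root_vertex i, mid_vertex i j) \<in> spider_edges adj i"
      "(mid_vertex i j, shared_leaf i j) \<in> spider_edges adj i" if "adj i j" for j
      using that by (auto simp: mem_spider_edges)
    then show ?thesis
      using \<open>v \<in> spider_vertices adj i\<close> unfolding mem_spider_vertices
      by (meson r_into_rtrancl rtrancl_into_rtrancl rtrancl.rtrancl_refl)
  qed
qed (auto simp: spider_vertices_def spider_edges_def)

lemma extended_tree_spider:
  assumes "finite {j. adj i j}" "\<exists>j. adj i j"
  shows "extended_tree (spider_vertices adj i) (spider_edges adj i) (root_vertex i)"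
  unfolding extended_tree_def
  using rooted_tree_spider[of adj i, OF assms(1)] children_spider_mid
  by (auto simp: tree_leaves_spider[of adj i, OF assms(2)] mem_spider_edges shared_leaf_eq_iff)

lemma tree_height_spider:
  assumes "\<exists>j. adj i j"
  shows "tree_height (spider_vertices adj i) (spider_edges adj i) (root_vertex i) = 3"
proof -
  let ?E = "spider_edges adj i" and ?L = "tree_leaves (spider_vertices adj i) (spider_edges adj i)"
  have leaves: "?L = shared_leaf i ` {j. adj i j}" using tree_leaves_spider[of adj i, OF assms] .
  have "length xs = 3"
    if xs: "xs \<noteq> []" "hd xs = root_vertex i" "last xs \<in> ?L" "successively (\<lambda>a b. (a, b) \<in> ?E) xs"
    for xs
  proof -
    obtain ys where ys: "xs = root_vertex i # ys" using xs(1,2) by (cases xs) auto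
    consider "ys = []" | y where "ys = [y]" | y z where "ys = [y, z]" | y z w us where "ys = y # z # w # us"
      by (cases ys; cases "tl ys"; cases "tl (tl ys)") auto
    then show ?thesis
      using xs(3,4) unfolding ys leaves
      by cases (auto simp: mem_spider_edges shared_leaf_eq_iff)
  qed
  moreover obtain j where "adj i j" using assms by blast
  then have "[root_vertex i, mid_vertex i j, shared_leaf i j] \<noteq> [] \<and>
      hd [root_vertex i, mid_vertex i j, shared_leaf i j] = root_vertex i \<and>
      last [root_vertex i, mid_vertex i j, shared_leaf i j] \<in> ?L \<and>
      successively (\<lambda>a b. (a, b) \<in> ?E) [root_vertex i, mid_vertex i j, shared_leaf i j]"
    by (auto simp: leaves mem_spider_edges)
  ultimately have "{length xs |xs. xs \<noteq> [] \<and> hd xs = root_vertex i \<and> last xs \<in> ?L \<and>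
      successively (\<lambda>a b. (a, b) \<in> ?E) xs} = {3}"
    by (auto intro!: exI[of _ "[root_vertex i, mid_vertex i j, shared_leaf i j]"])
  then show ?thesis by (simp add: tree_height_def)
qed

lemma common_spider_vertex:
  assumes "i \<noteq> j" "v \<in> spider_vertices adj i" "v \<in> spider_vertices adj j"
  shows "v = shared_leaf i j \<and> adj i j"
  using assms by (auto simp: mem_spider_vertices shared_leaf_eq_iff)

context
  fixes m adj
  assumes graph: "simple_graph_no_isolated m adj"
begin

lemma finite_neighbours: "finite {j. adj i j}"
  by (rule finite_subset[of _ "{..<m}"]) (use graph in \<open>auto simp: simple_graph_no_isolated_def\<close>)

lemma spider_leaves_graph:
  "i < m \<Longrightarrow> tree_leaves (spider_vertices adj i) (spider_edges adj i) = shared_leaf i ` {j. adj i j}"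
  using graph by (intro tree_leaves_spider) (simp add: simple_graph_no_isolated_def)

lemma shared_leaf_in_spider_leaves:
  assumes "adj i j"
  shows "shared_leaf i j \<in> tree_leaves (spider_vertices adj i) (spider_edges adj i)"
    and "shared_leaf i j \<in> tree_leaves (spider_vertices adj j) (spider_edges adj j)"
  using assms graph spider_leaves_graph shared_leaf_commute
  by (auto simp: simple_graph_no_isolated_def)

lemma adjacent_spiders_iff: "adjacent_trees (spider_vertices adj) (spider_edges adj) i j \<longleftrightarrow> adj i j"
proof
  assume "adjacent_trees (spider_vertices adj) (spider_edges adj) i j"
  then show "adj i j"
    using common_spider_vertex by (auto simp: adjacent_trees_def tree_leaves_def)
next
  assume ij: "adj i j"
  then have "shared_leaf i j \<in> tree_leaves (spider_vertices adj i) (spider_edges adj i)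
      \<inter> tree_leaves (spider_vertices adj j) (spider_edges adj j)"
    using shared_leaf_in_spider_leaves by blast
  moreover have "i \<noteq> j" using graph ij by (auto simp: simple_graph_no_isolated_def)
  ultimately show "adjacent_trees (spider_vertices adj) (spider_edges adj) i j"
    unfolding adjacent_trees_def by blast
qed

lemma card_spiders_with_leaf:
  assumes i: "i < m" and v: "v \<in> tree_leaves (spider_vertices adj i) (spider_edges adj i)"
  shows "card {k. k < m \<and> v \<in> tree_leaves (spider_vertices adj k) (spider_edges adj k)} = 2"
proof -
  obtain j where j: "adj i j" "v = shared_leaf i j" using v spider_leaves_graph[OF i] by auto
  then have "{k. k < m \<and> v \<in> tree_leaves (spider_vertices adj k) (spider_edges adj k)} = {i, j}"
    using graph shared_leaf_in_spider_leaves[OF j(1)] spider_leaves_graph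
    by (auto simp: simple_graph_no_isolated_def shared_leaf_eq_iff)
  moreover have "i \<noteq> j" using graph j(1) by (auto simp: simple_graph_no_isolated_def)
  ultimately show ?thesis by simp
qed

lemma binary_tree_based_spiders: "binary_tree_based m (spider_vertices adj) (spider_edges adj) root_vertex"
  unfolding binary_tree_based_def
proof (intro conjI)
  show "inj_on root_vertex {..<m}" by (simp add: inj_on_def)
  show "\<forall>i<m. extended_tree (spider_vertices adj i) (spider_edges adj i) (root_vertex i)"
    using graph finite_neighbours by (auto intro: extended_tree_spider simp: simple_graph_no_isolated_def)
  show "\<forall>i<m. \<forall>j<m. i \<noteq> j \<longrightarrow> (\<forall>a b. (a, b) \<in> spider_edges adj i \<longrightarrow>
      (a, b) \<notin> spider_edges adj j \<and> (b, a) \<notin> spider_edges adj j)"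
    by (auto simp: mem_spider_edges)
  show "\<forall>i<m. \<forall>v\<in>tree_leaves (spider_vertices adj i) (spider_edges adj i).
      card {j. j < m \<and> v \<in> tree_leaves (spider_vertices adj j) (spider_edges adj j)} = 2"
    using card_spiders_with_leaf by blast
  show "\<forall>i<m. \<forall>j<m. i \<noteq> j \<longrightarrow>
      (\<forall>v w. v \<in> spider_vertices adj i \<inter> spider_vertices adj j \<and>
         w \<in> spider_vertices adj i \<inter> spider_vertices adj j \<longrightarrow> v = w) \<and>
      (\<forall>v\<in>spider_vertices adj i \<inter> spider_vertices adj j.
         v \<in> tree_leaves (spider_vertices adj i) (spider_edges adj i) \<and>
         v \<in> tree_leaves (spider_vertices adj j) (spider_edges adj j))"
  proof (intro allI impI conjI ballI)
    fix i j v w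
    assume "i \<noteq> j" and "v \<in> spider_vertices adj i \<inter> spider_vertices adj j \<and>
      w \<in> spider_vertices adj i \<inter> spider_vertices adj j"
    then show "v = w" using common_spider_vertex[of i j] by blast
  next
    fix i j v assume "i \<noteq> j" and v: "v \<in> spider_vertices adj i \<inter> spider_vertices adj j"
    then have "v = shared_leaf i j" "adj i j" using common_spider_vertex[of i j v adj] by blast+
    then show "v \<in> tree_leaves (spider_vertices adj i) (spider_edges adj i)"
      and "v \<in> tree_leaves (spider_vertices adj j) (spider_edges adj j)"
      using shared_leaf_in_spider_leaves by blast+
  qed
qed

lemma pseudoedge_spiders_iff:
  "pseudoedge m (spider_vertices adj) (spider_edges adj) root_vertex e \<longleftrightarrow>
     (\<exists>i<m. \<exists>j<m. adj i j \<and> e = {root_vertex i, root_vertex j})"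
  by (simp add: pseudoedge_def adjacent_spiders_iff)

lemma pseudodegree_spider_le:
  "pseudodegree m (spider_vertices adj) (spider_edges adj) root_vertex (root_vertex i) \<le> card {j. adj i j}"
proof -
  have "{e. pseudoedge m (spider_vertices adj) (spider_edges adj) root_vertex e \<and> root_vertex i \<in> e}
      \<subseteq> (\<lambda>j. {root_vertex i, root_vertex j}) ` {j. adj i j}"
    using graph by (auto simp: pseudoedge_spiders_iff simple_graph_no_isolated_def)
  then show ?thesis
    unfolding pseudodegree_def
    by (meson card_image_le card_mono finite_imageI finite_neighbours le_trans)
qed

end

section \<open>Pseudomatchings\<close>

lemma card_Int_Union_le:
  assumes "finite M" "\<And>e. e \<in> M \<Longrightarrow> card (X \<inter> e) \<le> 1"
  shows "card (X \<inter> \<Union>M) \<le> card M"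
proof -
  have "card (X \<inter> \<Union>M) \<le> (\<Sum>e\<in>M. card (X \<inter> e))"
    unfolding Int_Union using assms(1) by (rule card_UN_le)
  also have "\<dots> \<le> (\<Sum>e\<in>M. 1)" using assms(2) by (rule sum_mono)
  finally show ?thesis by simp
qed

lemma large_matching_between:
  fixes k :: real
  assumes fin: "finite U" "finite W" and disj: "U \<inter> W = {}"
    and large: "k \<le> card U" "k \<le> card W"
    and hit: "\<And>A B. A \<subseteq> U \<Longrightarrow> B \<subseteq> W \<Longrightarrow> 2 * k / 3 < card A \<Longrightarrow> 2 * k / 3 < card B
      \<Longrightarrow> \<exists>a\<in>A. \<exists>b\<in>B. P {a, b}"
  shows "\<exists>M. (\<forall>e\<in>M. P e) \<and> (\<forall>e\<in>M. \<forall>f\<in>M. e \<noteq> f \<longrightarrow> e \<inter> f = {}) \<and>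
    (\<forall>e\<in>M. \<exists>u\<in>U. \<exists>w\<in>W. e = {u, w}) \<and> k / 3 \<le> card M"
proof -
  define matching where "matching M \<longleftrightarrow> (\<forall>e\<in>M. P e) \<and> (\<forall>e\<in>M. \<forall>f\<in>M. e \<noteq> f \<longrightarrow> e \<inter> f = {}) \<and>
    (\<forall>e\<in>M. \<exists>u\<in>U. \<exists>w\<in>W. e = {u, w})" for M
  have sub: "M \<subseteq> Pow (U \<union> W)" if "matching M" for M
    using that by (auto simp: matching_def)
  have "matching {}" by (simp add: matching_def)
  moreover have "\<forall>M. matching M \<longrightarrow> card M < Suc (card (Pow (U \<union> W)))"
    using sub fin by (auto simp: less_Suc_eq_le intro: card_mono)
  ultimately obtain M where M: "matching M" and maximum: "\<And>M'. matching M' \<Longrightarrow> card M' \<le> card M"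
    using ex_has_greatest_nat[of matching "{}" card] by blast
  have "finite M" using sub[OF M] fin by (meson finite_Pow_iff finite_UnI finite_subset)
  have "k / 3 \<le> card M"
  proof (rule ccontr)
    assume small: "\<not> k / 3 \<le> card M"
    have "card (X \<inter> \<Union>M) \<le> card M" if "X = U \<or> X = W" for X
    proof (rule card_Int_Union_le[OF \<open>finite M\<close>])
      fix e assume "e \<in> M"
      then obtain u w where "u \<in> U" "w \<in> W" "e = {u, w}" using M by (auto simp: matching_def)
      then have "X \<inter> e \<subseteq> {u} \<or> X \<inter> e \<subseteq> {w}" using that disj by auto
      then show "card (X \<inter> e) \<le> 1" using card_mono[of "{_}" "X \<inter> e"] by fastforce
    qed
    then have "real (card (U \<inter> \<Union>M)) \<le> card M" "real (card (W \<inter> \<Union>M)) \<le> card M"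
      by simp_all
    moreover have "real (card U) = card (U \<inter> \<Union>M) + card (U - \<Union>M)"
      "real (card W) = card (W \<inter> \<Union>M) + card (W - \<Union>M)"
      using card_Int_Diff[OF fin(1), of "\<Union>M"] card_Int_Diff[OF fin(2), of "\<Union>M"] by simp_all
    ultimately have "2 * k / 3 < card (U - \<Union>M)" "2 * k / 3 < card (W - \<Union>M)"
      using large small by linarith+
    then obtain a b where ab: "a \<in> U - \<Union>M" "b \<in> W - \<Union>M" "P {a, b}"
      using hit[of "U - \<Union>M" "W - \<Union>M"] by blast
    have "matching (insert {a, b} M)"
      using M ab by (auto simp: matching_def)
    moreover have "{a, b} \<notin> M" using ab(1) by blast
    ultimately show False using maximum \<open>finite M\<close> by fastforce
  qed
  then show ?thesis using M unfolding matching_def by blast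
qed

lemma pseudoedge_between_large_root_sets:
  assumes adj: "sparse_expander m D t adj"
    and A: "A \<subseteq> roots m root_vertex" "t < card A"
    and B: "B \<subseteq> roots m root_vertex" "t < card B" and "A \<inter> B = {}"
  shows "\<exists>a\<in>A. \<exists>b\<in>B. pseudoedge m (spider_vertices adj) (spider_edges adj) root_vertex {a, b}"
proof -
  obtain A' B' where A': "A' \<subseteq> {..<m}" "A = root_vertex ` A'" and B': "B' \<subseteq> {..<m}" "B = root_vertex ` B'"
    using A(1) B(1) unfolding roots_def subset_image_iff by blast
  have inj: "inj_on root_vertex X" for X by (simp add: inj_on_def)
  have "A' \<inter> B' = {}" using \<open>A \<inter> B = {}\<close> A'(2) B'(2) by blast
  moreover have "t < card A'" "t < card B'"
    using A(2) B(2) unfolding A'(2) B'(2) by (simp_all add: card_image[OF inj])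
  ultimately obtain a b where ab: "a \<in> A'" "b \<in> B'" "adj a b"
    using adj A'(1) B'(1) unfolding sparse_expander_def by blast
  moreover have "simple_graph_no_isolated m adj" using adj by (simp add: sparse_expander_def)
  ultimately have "pseudoedge m (spider_vertices adj) (spider_edges adj) root_vertex {root_vertex a, root_vertex b}"
    using A'(1) B'(1) by (auto simp: pseudoedge_spiders_iff)
  then show ?thesis using ab A'(2) B'(2) by blast
qed

lemma large_pseudomatching_spiders:
  assumes adj: "sparse_expander m D (2 * k / 3) adj"
    and UW: "U \<subseteq> roots m root_vertex" "W \<subseteq> roots m root_vertex" "U \<inter> W = {}"
      "k \<le> card U" "k \<le> card W"
  shows "\<exists>M. pseudomatching_between m (spider_vertices adj) (spider_edges adj) root_vertex U W M \<and>
    k / 3 \<le> card M"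
proof -
  have fin: "finite U" "finite W"
    using UW(1,2) by (auto simp: roots_def intro: finite_subset[OF _ finite_imageI])
  have hit: "\<exists>a\<in>A. \<exists>b\<in>B. pseudoedge m (spider_vertices adj) (spider_edges adj) root_vertex {a, b}"
    if "A \<subseteq> U" "B \<subseteq> W" "2 * k / 3 < card A" "2 * k / 3 < card B" for A B
    using that UW by (intro pseudoedge_between_large_root_sets[OF adj]) auto
  have "\<exists>M. (\<forall>e\<in>M. pseudoedge m (spider_vertices adj) (spider_edges adj) root_vertex e) \<and>
      (\<forall>e\<in>M. \<forall>f\<in>M. e \<noteq> f \<longrightarrow> e \<inter> f = {}) \<and> (\<forall>e\<in>M. \<exists>u\<in>U. \<exists>w\<in>W. e = {u, w}) \<and>
      k / 3 \<le> card M"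
    by (rule large_matching_between[OF fin]) (use UW hit in auto)
  then show ?thesis
    unfolding pseudomatching_between_def by (simp only: conj_assoc)
qed

lemma spider_pseudoexpander:
  assumes adj: "sparse_expander m D (2 * real m powr 0.999 / 3) adj" and "1 \<le> m"
  shows "pseudoexpander m (spider_vertices adj) (spider_edges adj) root_vertex \<and>
    (\<forall>t\<in>roots m root_vertex. real (pseudodegree m (spider_vertices adj) (spider_edges adj) root_vertex t) \<le> D)"
proof (intro conjI ballI)
  have graph: "simple_graph_no_isolated m adj" using adj by (simp add: sparse_expander_def)
  show "real (pseudodegree m (spider_vertices adj) (spider_edges adj) root_vertex t) \<le> D"
    if t: "t \<in> roots m root_vertex" for t
  proof -
    obtain i where "t = root_vertex i" using t by (auto simp: roots_def)
    then have "pseudodegree m (spider_vertices adj) (spider_edges adj) root_vertex t \<le> card {j. adj i j}"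
      using pseudodegree_spider_le[OF graph] by simp
    then show ?thesis using adj unfolding sparse_expander_def by (meson of_nat_le_iff order.trans)
  qed
  show "pseudoexpander m (spider_vertices adj) (spider_edges adj) root_vertex"
    unfolding pseudoexpander_def
  proof (intro conjI allI impI)
    show "binary_tree_based m (spider_vertices adj) (spider_edges adj) root_vertex"
      using graph by (rule binary_tree_based_spiders)
    show "real (tree_height (spider_vertices adj i) (spider_edges adj i) (root_vertex i))
        \<le> log 2 (real m) / 4.9 + 3" if "i < m" for i
      using graph that \<open>1 \<le> m\<close> tree_height_spider[of adj i]
      by (simp add: simple_graph_no_isolated_def)
    fix U W assume "U \<subseteq> roots m root_vertex \<and> W \<subseteq> roots m root_vertex \<and> U \<inter> W = {} \<and>
      real m powr 0.999 \<le> card U \<and> real m powr 0.999 \<le> card W"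
    then show "\<exists>M. pseudomatching_between m (spider_vertices adj) (spider_edges adj) root_vertex U W M \<and>
        real m powr 0.999 / 3 \<le> card M"
      by (intro large_pseudomatching_spiders[OF adj]) auto
  qed
qed

section \<open>Choice of parameters\<close>

lemma exists_sparse_expander_powr:
  assumes m: "2 \<le> m" and p: "4 \<le> real m powr (1 / 4.9)"
    and t: "2 * real m powr 0.999 / 3 + 1 \<le> real m"
    and dense: "2 * ln (real m) < (real m powr (1 / 4.9) / 2 - 2) * (2 * real m powr 0.999 / 3) / real m"
  shows "\<exists>adj. sparse_expander m (real m powr (1 / 4.9)) (2 * real m powr 0.999 / 3) adj"
proof -
  define p where "p = real m powr (1 / 4.9)"
  define t where "t = 2 * real m powr 0.999 / 3"
  define s where "s = nat \<lceil>t\<rceil>"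
  define d where "d = nat \<lfloor>p / 2\<rfloor> - 1"
  have "0 < t" using m by (simp add: t_def)
  then have "real s = of_int \<lceil>t\<rceil>" by (simp add: s_def)
  then have s: "t \<le> real s" "real s < t + 1" by linarith+
  then have "1 \<le> s" using \<open>0 < t\<close> by linarith
  have d: "p / 2 - 2 \<le> real d" "2 * real d + 2 \<le> p"
    using p unfolding d_def p_def by linarith+
  have "(p / 2 - 2) * t \<le> real d * real s"
    using s d p \<open>0 < t\<close> unfolding p_def by (intro mult_mono) auto
  then have "(p / 2 - 2) * t / real m \<le> real d * real s / real m"
    by (rule divide_right_mono) simp
  then have "2 * ln (real m) < real d * real s / real m"
    using dense unfolding p_def[symmetric] t_def[symmetric] by linarith
  moreover have "s \<le> m" using s t unfolding t_def by linarith
  ultimately have "\<exists>adj. sparse_expander m (2 * real d + 2) (real s - 1) adj"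
    using exists_sparse_expander[OF m \<open>1 \<le> s\<close>] by blast
  moreover have "real s - 1 \<le> t" using s by linarith
  ultimately show ?thesis
    using d(2) unfolding p_def[symmetric] t_def[symmetric] by (meson sparse_expander_mono)
qed

lemma eventually_sparse_expander:
  "\<forall>\<^sub>F m in sequentially. \<exists>adj. sparse_expander m (real m powr (1 / 4.9)) (2 * real m powr 0.999 / 3) adj"
proof -
  have "\<forall>\<^sub>F m in sequentially. 2 \<le> m" by (rule eventually_ge_at_top)
  moreover have "\<forall>\<^sub>F m in sequentially. 4 \<le> real m powr (1 / 4.9)" by real_asymp
  moreover have "\<forall>\<^sub>F m in sequentially. 2 * real m powr 0.999 / 3 + 1 \<le> real m" by real_asymp
  moreover have "\<forall>\<^sub>F m in sequentially.
      2 * ln (real m) < (real m powr (1 / 4.9) / 2 - 2) * (2 * real m powr 0.999 / 3) / real m"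
    by real_asymp
  ultimately show ?thesis
    by eventually_elim (rule exists_sparse_expander_powr)
qed

theorem theorem1:
  shows "\<exists>m0::nat. \<forall>m \<ge> m0. \<exists>(Vs :: nat \<Rightarrow> nat set) (Es :: nat \<Rightarrow> (nat \<times> nat) set) rt.
           pseudoexpander m Vs Es rt \<and>
           (\<forall>t \<in> roots m rt. real (pseudodegree m Vs Es rt t) \<le> real m powr (1 / 4.9))"
proof -
  obtain m0 where m0: "\<And>m. m0 \<le> m \<Longrightarrow>
      \<exists>adj. sparse_expander m (real m powr (1 / 4.9)) (2 * real m powr 0.999 / 3) adj"
    using eventually_sparse_expander unfolding eventually_sequentially by blast
  show ?thesis
  proof (intro exI[of _ "max 1 m0"] allI impI)
    fix m :: nat assume m: "max 1 m0 \<le> m"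
    then obtain adj where "sparse_expander m (real m powr (1 / 4.9)) (2 * real m powr 0.999 / 3) adj"
      using m0 by auto
    then show "\<exists>(Vs :: nat \<Rightarrow> nat set) (Es :: nat \<Rightarrow> (nat \<times> nat) set) rt.
        pseudoexpander m Vs Es rt \<and> (\<forall>t \<in> roots m rt. real (pseudodegree m Vs Es rt t) \<le> real m powr (1 / 4.9))"
      using spider_pseudoexpander m by fastforce
  qed
qed

end
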